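(* Let spacetime be covered by global coordinates $(x^\mu)=(x^0,x^i)$ with $x^0=ct$, equipped with a physical metric $g_{\mu\nu}$ of signature $(+,-,-,-)$ with $g_{00}>0$ everywhere, and let an arbitrarily moving, linear, isotropic, nondispersive fluid dielectric medium with index of refraction $n(x)$ and unit 4-velocity $w^\mu(x)$ (i.e. $g_{\mu\nu}w^\mu w^\nu=1$) be present. Let $\bar g^{\mu\nu}=g^{\mu\nu}+(n^2-1)w^\mu w^\nu$ be the contravariant components of Gordon's optical metric. Consider, within the geometrical optics approximation, a light ray emitted at $x_A=(x_A^0,\mathbf x_A)$ and received at $x_B=(x_B^0,\mathbf x_B)$, with wave covector $k_\mu=\partial_\mu\mathscr S$, where the eikonal $\mathscr S$ satisfies $\bar g^{\mu\nu}\partial_\mu\mathscr S\,\partial_\nu\mathscr S=0$. Let $\mathcal R_r(\mathbf x_A,x_B)=c(t_B-t_A)$ and $\mathcal R_e(x_A,\mathbf x_B)=c(t_B-t_A)$ be the reception and emission range transfer functions, which satisfy $(k_i/k_0)_A=\partial\mathcal R_r/\partial x_A^i$ and $(k_i/k_0)_B=-\partial\mathcal R_e/\partial x_B^i$. Then $$\bar g^{00}(x_B^0-\mathcal R_r,\mathbf x_A)+2\bar g^{0i}(x_B^0-\mathcal R_r,\mathbf x_A)\frac{\partial\mathcal R_r}{\partial x_A^i}+\bar g^{ij}(x_B^0-\mathcal R_r,\mathbf x_A)\frac{\partial\mathcal R_r}{\partial x_A^i}\frac{\partial\mathcal R_r}{\partial x_A^j}=0,$$ and $$\bar g^{00}(x_A^0+\mathcal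 R_e,\mathbf x_B)-2\bar g^{0i}(x_A^0+\mathcal R_e,\mathbf x_B)\frac{\partial\mathcal R_e}{\partial x_B^i}+\bar g^{ij}(x_A^0+\mathcal R_e,\mathbf x_B)\frac{\partial\mathcal R_e}{\partial x_B^i}\frac{\partial\mathcal R_e}{\partial x_B^j}=0.$$
   Context: Summation over repeated indices is used; Greek indices run over $0,\dots,3$, Latin over $1,2,3$. The light ray is assumed quasi-Minkowskian: for each spatial position $\mathbf x_A$, the past null cone (of the optical metric) at $x_B$ intersects the timelike worldline $\mathbf x=\mathbf x_A$ at exactly one point $x_A=(ct_A,\mathbf x_A)$, so that the reception time transfer function $\mathcal T_r(\mathbf x_A,t_B,\mathbf x_B)=t_B-t_A$ and emission time transfer function $\mathcal T_e(t_A,\mathbf x_A,\mathbf x_B)=t_B-t_A$ are uniquely defined; $\mathcal R_r=c\mathcal T_r$, $\mathcal R_e=c\mathcal T_e$. The notation $\bar g^{\mu\nu}(y^0,\mathbf y)$ means the component evaluated at the point event with coordinates $(y^0,\mathbf y)$. *)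

theory Defs
  imports "HOL-Analysis.Analysis"
begin

(* Coordinates: a spacetime event is a function  x :: nat => real  with x 0 = x^0 = ct
   and x 1, x 2, x 3 the spatial coordinates (other indices are irrelevant).
   A spatial position is likewise a function nat => real of which only indices 1,2,3 are used. *)

definition event :: "real \<Rightarrow> (nat \<Rightarrow> real) \<Rightarrow> (nat \<Rightarrow> real)" where
  "event y0 y = (\<lambda>\<mu>. if \<mu> = 0 then y0 else y \<mu>)"

definition coord_partial :: "((nat \<Rightarrow> real) \<Rightarrow> real) \<Rightarrow> nat \<Rightarrow> (nat \<Rightarrow> real) \<Rightarrow> real" where
  "coord_partial F \<mu> x = deriv (\<lambda>s. F (x(\<mu> := x \<mu> + s))) 0"

definition eta :: "nat \<Rightarrow> nat \<Rightarrow> real" where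
  "eta a b = (if a = b then (if a = 0 then 1 else -1) else 0)"

definition gordon ::
  "((nat \<Rightarrow> real) \<Rightarrow> nat \<Rightarrow> nat \<Rightarrow> real) \<Rightarrow> ((nat \<Rightarrow> real) \<Rightarrow> real)
   \<Rightarrow> ((nat \<Rightarrow> real) \<Rightarrow> nat \<Rightarrow> real) \<Rightarrow> (nat \<Rightarrow> real) \<Rightarrow> nat \<Rightarrow> nat \<Rightarrow> real" where
  "gordon ginv n w x \<mu> \<nu> = ginv x \<mu> \<nu> + ((n x)\<^sup>2 - 1) * w x \<mu> * w x \<nu>"

end

theory Submission
  imports Defs
begin

text \<open>At either endpoint the derivatives of the range transfer function are, up to a sign,
  the ratios \<open>k\<^sub>i / k\<^sub>0\<close> of the wave covector \<open>k\<^sub>\<mu> = \<partial>\<^sub>\<mu>S\<close>. Dividing the eikonal equation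
  \<open>g\<^sup>\<mu>\<^sup>\<nu> k\<^sub>\<mu> k\<^sub>\<nu> = 0\<close> of the (symmetric) optical metric by \<open>k\<^sub>0\<^sup>2\<close> and splitting off the time
  index therefore yields both identities; the only other ingredient is that the inverse of the
  symmetric physical metric is symmetric.\<close>

lemma right_inverse_of_symmetric_is_symmetric:
  fixes A B :: "nat \<Rightarrow> nat \<Rightarrow> 'a::comm_semiring_1"
  assumes A_sym: "\<And>\<mu> \<nu>. \<mu> < N \<Longrightarrow> \<nu> < N \<Longrightarrow> A \<mu> \<nu> = A \<nu> \<mu>"
    and right_inv: "\<And>\<mu> \<rho>. \<mu> < N \<Longrightarrow> \<rho> < N \<Longrightarrow>
                      (\<Sum>\<nu><N. A \<mu> \<nu> * B \<nu> \<rho>) = (if \<mu> = \<rho> then 1 else 0)"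
    and "a < N" "b < N"
  shows "B a b = B b a"
proof -
  have left_inv: "(\<Sum>\<mu><N. B \<mu> b * A \<mu> \<nu>) = (if \<nu> = b then 1 else 0)" if "\<nu> < N" for \<nu>
    using right_inv[of \<nu> b] A_sym \<open>b < N\<close> that by (simp add: mult.commute)
  \<comment> \<open>\<open>B\<^sup>T A B\<close> equals both \<open>B\<close> and \<open>B\<^sup>T\<close>\<close>
  have "B b a = (\<Sum>\<nu><N. if \<nu> = b then B \<nu> a else 0)"
    using \<open>b < N\<close> by (simp add: sum.delta)
  also have "\<dots> = (\<Sum>\<nu><N. (\<Sum>\<mu><N. B \<mu> b * A \<mu> \<nu>) * B \<nu> a)"
    by (rule sum.cong) (simp_all add: left_inv)
  also have "\<dots> = (\<Sum>\<mu><N. B \<mu> b * (\<Sum>\<nu><N. A \<mu> \<nu> * B \<nu> a))"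
    unfolding sum_distrib_right sum_distrib_left mult.assoc by (rule sum.swap)
  also have "\<dots> = (\<Sum>\<mu><N. if \<mu> = a then B \<mu> b else 0)"
    by (rule sum.cong) (simp_all add: right_inv \<open>a < N\<close>)
  also have "\<dots> = B a b"
    using \<open>a < N\<close> by (simp add: sum.delta)
  finally show ?thesis by simp
qed

lemma coord_partial_eqI:
  assumes "((\<lambda>s. F (x(\<mu> := x \<mu> + s))) has_real_derivative D) (at 0)"
  shows "coord_partial F \<mu> x = D"
  using DERIV_imp_deriv[OF assms] by (simp add: coord_partial_def)

lemma quadratic_form_split_first_index:
  fixes G :: "nat \<Rightarrow> nat \<Rightarrow> real" and k :: "nat \<Rightarrow> real"
  assumes G_sym: "\<And>i. i \<in> {1..m} \<Longrightarrow> G i 0 = G 0 i"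
  shows "(\<Sum>\<mu><Suc m. \<Sum>\<nu><Suc m. G \<mu> \<nu> * k \<mu> * k \<nu>)
         = G 0 0 * (k 0)\<^sup>2 + 2 * k 0 * (\<Sum>i\<in>{1..m}. G 0 i * k i)
           + (\<Sum>i\<in>{1..m}. \<Sum>j\<in>{1..m}. G i j * k i * k j)"
proof -
  have split: "(\<Sum>\<mu><Suc m. f \<mu>) = f 0 + (\<Sum>i\<in>{1..m}. f i)" for f :: "nat \<Rightarrow> real"
    by (simp add: lessThan_Suc_atMost atLeast0AtMost[symmetric] sum.atLeast_Suc_atMost)
  have "(\<Sum>i\<in>{1..m}. G i 0 * k i * k 0) = k 0 * (\<Sum>i\<in>{1..m}. G 0 i * k i)"
    by (simp add: sum_distrib_left G_sym algebra_simps)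
  then show ?thesis
    unfolding split by (simp add: sum.distrib sum_distrib_left power2_eq_square algebra_simps)
qed

text \<open>The sign \<open>s\<close> accounts for the two conventions \<open>(k\<^sub>i/k\<^sub>0)\<^sub>A = \<partial>R\<^sub>r/\<partial>x\<^sub>A\<^sup>i\<close> and
  \<open>(k\<^sub>i/k\<^sub>0)\<^sub>B = -\<partial>R\<^sub>e/\<partial>x\<^sub>B\<^sup>i\<close>.\<close>

lemma null_quadratic_form_ratios:
  fixes G :: "nat \<Rightarrow> nat \<Rightarrow> real" and k D :: "nat \<Rightarrow> real"
  assumes G_sym: "\<And>i. i \<in> {1..m} \<Longrightarrow> G i 0 = G 0 i"
    and null: "(\<Sum>\<mu><Suc m. \<Sum>\<nu><Suc m. G \<mu> \<nu> * k \<mu> * k \<nu>) = 0"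
    and "k 0 \<noteq> 0" and "s\<^sup>2 = 1"
    and D: "\<And>i. i \<in> {1..m} \<Longrightarrow> D i = s * (k i / k 0)"
  shows "G 0 0 + 2 * s * (\<Sum>i\<in>{1..m}. G 0 i * D i)
         + (\<Sum>i\<in>{1..m}. \<Sum>j\<in>{1..m}. G i j * D i * D j) = 0"
proof -
  have kD: "k 0 * D i = s * k i" if "i \<in> {1..m}" for i
    using D[OF that] \<open>k 0 \<noteq> 0\<close> by simp
  have "(k 0)\<^sup>2 * (2 * s * (\<Sum>i\<in>{1..m}. G 0 i * D i))
      = 2 * k 0 * (\<Sum>i\<in>{1..m}. s * G 0 i * (k 0 * D i))"
    by (simp add: sum_distrib_left power2_eq_square algebra_simps)
  also have "\<dots> = 2 * k 0 * (\<Sum>i\<in>{1..m}. G 0 i * k i)"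
  proof -
    have "s * G 0 i * (k 0 * D i) = G 0 i * k i" if "i \<in> {1..m}" for i
      unfolding kD[OF that] using \<open>s\<^sup>2 = 1\<close> by (simp add: power2_eq_square algebra_simps)
    then have "(\<Sum>i\<in>{1..m}. s * G 0 i * (k 0 * D i)) = (\<Sum>i\<in>{1..m}. G 0 i * k i)"
      by (rule sum.cong[OF refl])
    then show ?thesis by simp
  qed
  finally have time_space: "(k 0)\<^sup>2 * (2 * s * (\<Sum>i\<in>{1..m}. G 0 i * D i))
      = 2 * k 0 * (\<Sum>i\<in>{1..m}. G 0 i * k i)" .
  have space_space: "(k 0)\<^sup>2 * (\<Sum>i\<in>{1..m}. \<Sum>j\<in>{1..m}. G i j * D i * D j)
      = (\<Sum>i\<in>{1..m}. \<Sum>j\<in>{1..m}. G i j * k i * k j)"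
  proof -
    have "G i j * (k 0 * D i) * (k 0 * D j) = G i j * k i * k j"
      if "i \<in> {1..m}" "j \<in> {1..m}" for i j
      unfolding kD[OF that(1)] kD[OF that(2)] using \<open>s\<^sup>2 = 1\<close>
      by (simp add: power2_eq_square algebra_simps)
    then have "(\<Sum>i\<in>{1..m}. \<Sum>j\<in>{1..m}. G i j * (k 0 * D i) * (k 0 * D j))
        = (\<Sum>i\<in>{1..m}. \<Sum>j\<in>{1..m}. G i j * k i * k j)"
      by (intro sum.cong refl)
    then show ?thesis
      by (simp add: sum_distrib_left power2_eq_square algebra_simps)
  qed
  have "(k 0)\<^sup>2 * (G 0 0 + 2 * s * (\<Sum>i\<in>{1..m}. G 0 i * D i)
         + (\<Sum>i\<in>{1..m}. \<Sum>j\<in>{1..m}. G i j * D i * D j))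
      = G 0 0 * (k 0)\<^sup>2 + (k 0)\<^sup>2 * (2 * s * (\<Sum>i\<in>{1..m}. G 0 i * D i))
         + (k 0)\<^sup>2 * (\<Sum>i\<in>{1..m}. \<Sum>j\<in>{1..m}. G i j * D i * D j)"
    by (simp add: ring_distribs)
  also have "\<dots> = (\<Sum>\<mu><Suc m. \<Sum>\<nu><Suc m. G \<mu> \<nu> * k \<mu> * k \<nu>)"
    unfolding time_space space_space
    by (rule quadratic_form_split_first_index[of m G k, OF G_sym, symmetric])
  also have "\<dots> = 0" by (rule null)
  finally show ?thesis using \<open>k 0 \<noteq> 0\<close> by simp
qed

theorem theorem1:
  fixes g ginv :: "(nat \<Rightarrow> real) \<Rightarrow> nat \<Rightarrow> nat \<Rightarrow> real"
    and n :: "(nat \<Rightarrow> real) \<Rightarrow> real"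
    and w :: "(nat \<Rightarrow> real) \<Rightarrow> nat \<Rightarrow> real"
    and S :: "(nat \<Rightarrow> real) \<Rightarrow> real"
    and U :: "(nat \<Rightarrow> real) set"
    and Rr :: "(nat \<Rightarrow> real) \<Rightarrow> real \<Rightarrow> (nat \<Rightarrow> real) \<Rightarrow> real"
    and Re :: "real \<Rightarrow> (nat \<Rightarrow> real) \<Rightarrow> (nat \<Rightarrow> real) \<Rightarrow> real"
    and x0A x0B :: real and xA xB :: "nat \<Rightarrow> real"
  assumes g_sym: "\<And>x \<mu> \<nu>. g x \<mu> \<nu> = g x \<nu> \<mu>"
    and g_inv: "\<And>x \<mu> \<rho>. \<mu> < 4 \<Longrightarrow> \<rho> < 4 \<Longrightarrow>
                 (\<Sum>\<nu><4. g x \<mu> \<nu> * ginv x \<nu> \<rho>) = (if \<mu> = \<rho> then 1 else 0)"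
    and g_sig: "\<And>x. \<exists>L :: nat \<Rightarrow> nat \<Rightarrow> real. \<forall>a<4. \<forall>b<4.
                 (\<Sum>\<mu><4. \<Sum>\<nu><4. L \<mu> a * g x \<mu> \<nu> * L \<nu> b) = eta a b"
    and g00: "\<And>x. g x 0 0 > 0"
    and w_unit: "\<And>x. (\<Sum>\<mu><4. \<Sum>\<nu><4. g x \<mu> \<nu> * w x \<mu> * w x \<nu>) = 1"
    and U_open: "open U"
    and A_in: "event x0A xA \<in> U" and B_in: "event x0B xB \<in> U"
    and S_diff: "\<And>x \<mu>. x \<in> U \<Longrightarrow> \<mu> < 4 \<Longrightarrow>
                 (\<lambda>s. S (x(\<mu> := x \<mu> + s))) differentiable (at 0)"
    and eikonal: "\<And>x. x \<in> U \<Longrightarrow>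
                 (\<Sum>\<mu><4. \<Sum>\<nu><4. gordon ginv n w x \<mu> \<nu> * coord_partial S \<mu> x * coord_partial S \<nu> x) = 0"
    and k0A: "coord_partial S 0 (event x0A xA) \<noteq> 0"
    and k0B: "coord_partial S 0 (event x0B xB) \<noteq> 0"
    and tA: "x0A = x0B - Rr xA x0B xB"
    and tB: "x0B = x0A + Re x0A xA xB"
    and dRr: "\<And>i. i \<in> {1..3} \<Longrightarrow>
                 ((\<lambda>s. Rr (xA(i := xA i + s)) x0B xB) has_real_derivative
                   (coord_partial S i (event x0A xA) / coord_partial S 0 (event x0A xA))) (at 0)"
    and dRe: "\<And>i. i \<in> {1..3} \<Longrightarrow>
                 ((\<lambda>s. Re x0A xA (xB(i := xB i + s))) has_real_derivative
                   - (coord_partial S i (event x0B xB) / coord_partial S 0 (event x0B xB))) (at 0)"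
  shows "(let gb = gordon ginv n w (event (x0B - Rr xA x0B xB) xA);
              D = (\<lambda>i. coord_partial (\<lambda>y. Rr y x0B xB) i xA)
          in gb 0 0 + 2 * (\<Sum>i\<in>{1..3}. gb 0 i * D i)
             + (\<Sum>i\<in>{1..3}. \<Sum>j\<in>{1..3}. gb i j * D i * D j) = 0)
       \<and> (let gb = gordon ginv n w (event (x0A + Re x0A xA xB) xB);
              D = (\<lambda>i. coord_partial (\<lambda>y. Re x0A xA y) i xB)
          in gb 0 0 - 2 * (\<Sum>i\<in>{1..3}. gb 0 i * D i)
             + (\<Sum>i\<in>{1..3}. \<Sum>j\<in>{1..3}. gb i j * D i * D j) = 0)"
proof -
  have gordon_sym: "gordon ginv n w x i 0 = gordon ginv n w x 0 i" if "i \<in> {1..3}" for x i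
    using right_inverse_of_symmetric_is_symmetric[of 4 "g x" "ginv x" i 0] g_sym g_inv that
    by (auto simp: gordon_def)
  have null: "(\<Sum>\<mu><Suc 3. \<Sum>\<nu><Suc 3.
      gordon ginv n w x \<mu> \<nu> * coord_partial S \<mu> x * coord_partial S \<nu> x) = 0"
    if "x \<in> U" for x
    using eikonal[OF that] by simp
  let ?kA = "\<lambda>\<mu>. coord_partial S \<mu> (event x0A xA)"
  let ?kB = "\<lambda>\<mu>. coord_partial S \<mu> (event x0B xB)"
  let ?DA = "\<lambda>i. coord_partial (\<lambda>y. Rr y x0B xB) i xA"
  let ?DB = "\<lambda>i. coord_partial (\<lambda>y. Re x0A xA y) i xB"
  have DA: "?DA i = 1 * (?kA i / ?kA 0)" if "i \<in> {1..3}" for i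
    using coord_partial_eqI[OF dRr[OF that]] by simp
  have DB: "?DB i = -1 * (?kB i / ?kB 0)" if "i \<in> {1..3}" for i
    using coord_partial_eqI[OF dRe[OF that]] by simp
  have reception: "let gb = gordon ginv n w (event x0A xA)
      in gb 0 0 + 2 * 1 * (\<Sum>i\<in>{1..3}. gb 0 i * ?DA i)
         + (\<Sum>i\<in>{1..3}. \<Sum>j\<in>{1..3}. gb i j * ?DA i * ?DA j) = 0"
    unfolding Let_def
    by (rule null_quadratic_form_ratios[OF gordon_sym null[OF A_in] k0A _ DA]) simp_all
  have emission: "let gb = gordon ginv n w (event x0B xB)
      in gb 0 0 + 2 * -1 * (\<Sum>i\<in>{1..3}. gb 0 i * ?DB i)
         + (\<Sum>i\<in>{1..3}. \<Sum>j\<in>{1..3}. gb i j * ?DB i * ?DB j) = 0"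
    unfolding Let_def
    by (rule null_quadratic_form_ratios[OF gordon_sym null[OF B_in] k0B _ DB]) simp_all
  show ?thesis
    using reception emission by (simp add: Let_def tA[symmetric] tB[symmetric])
qed

end
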